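(* Let $n\ge2$ and let $\mathcal G_n$, $\mathcal N_{0,n}$ be as in the context. Let $D=\Theta((\gamma,g,\mu),C(\mu\eta))$ be a compact open bisection in $\mathcal G_n$, where $\gamma,\mu,\eta\in X^*$ and $g\in\mathfrak G_n$. Then the following are equivalent: (1) for some $h\in\mathcal N_{0,n}$, $[(\varnothing,h,\varnothing),\mathbf 1^\infty]\in\overline D$; (2) for all $h\in\mathcal N_{0,n}$, $[(\varnothing,h,\varnothing),\mathbf 1^\infty]\in\overline D$.
   Context: Let $X=\{\mathbf 0,\mathbf 1\}$, $X^*$ the finite words (with empty word $\varnothing$), $X^\omega$ the infinite words, $C(\eta)=\{\eta w:w\in X^\omega\}$, $\mathbf 1^\infty$ the infinite word of ones. Fix $n\ge2$, a primitive polynomial $f_n$ of degree $n$ over $\mathbb F_2$ with root $\alpha$, and $\operatorname{Tr}(\beta)=\beta+\beta^2+\dots+\beta^{2^{n-1}}\in\mathbb F_2$. $\mathfrak G_n$ is the group of automorphisms of the binary rooted tree $X^*$ generated by $a$ ($a\cdot(\mathbf 0w)=\mathbf 1w$, $a\cdot(\mathbf 1w)=\mathbf 0w$) and $\iota_n(\beta)$, $\beta\in\mathbb F_{2^n}$, where $\iota_n(\beta)\cdot(\mathbf 0w)=\mathbf 0(a^{\operatorname{Tr}(\beta)}\cdot w)$, $\iota_n(\beta)\cdot(\mathbf 1w)=\mathbf 1(\iota_n(\alpha\beta)\cdot w)$; restrictions $g|_x$ are given by $g\cdot(xw)=(g\cdot x)(g|_x\cdot w)$. $\mathcal N_{0,n}=\iota_n(\mathbb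 F_{2^n})$. $\mathcal G_n$ is the groupoid of germs of the action of the inverse semigroup $\{(\eta,g,\mu)\}\cup\{0\}$ on $X^\omega$ with $(\eta,g,\mu):C(\mu)\to C(\eta)$, $\mu w\mapsto\eta(g\cdot w)$; germs $[(\eta,g,\mu),w]$, $w\in C(\mu)$, with $[(\eta,g,\mu),w]=[(\eta',g',\mu'),w']$ iff $w=w'$ and some finite prefix $\nu=\mu\epsilon=\mu'\epsilon'$ of $w$ satisfies $\eta(g\cdot\epsilon)=\eta'(g'\cdot\epsilon')$ and $g|_\epsilon=g'|_{\epsilon'}$. For $s=(\eta,g,\mu)$ and open $U\subseteq C(\mu)$, $\Theta(s,U)=\{[s,w]:w\in U\}$; these open bisections form a basis of the (non-Hausdorff) topology. $\overline D$ denotes closure in $\mathcal G_n$. *)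

theory Defs
  imports "HOL-Analysis.Analysis"
begin

text \<open>Letters: False = 0, True = 1. Finite words: bool list. Infinite words: nat \<Rightarrow> bool.
  Tree automorphisms are represented as maps on finite words.\<close>

type_synonym word = "bool list"
type_synonym iword = "nat \<Rightarrow> bool"
type_synonym tauto = "bool list \<Rightarrow> bool list"

text \<open>Trace F_{2^n} \<rightarrow> F_2 (value in {0,1} of the field).\<close>
definition trace :: "nat \<Rightarrow> 'k::field \<Rightarrow> 'k" where
  "trace n \<beta> = (\<Sum>i<n. \<beta> ^ (2 ^ i))"

fun act_a :: tauto where
  "act_a [] = []"
| "act_a (x # w) = (\<not> x) # w"

fun iota :: "nat \<Rightarrow> 'k::field \<Rightarrow> 'k \<Rightarrow> tauto" where
  "iota n \<alpha> \<beta> [] = []"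
| "iota n \<alpha> \<beta> (False # w) = False # (if trace n \<beta> = 1 then act_a w else w)"
| "iota n \<alpha> \<beta> (True # w) = True # iota n \<alpha> (\<alpha> * \<beta>) w"

inductive_set Ggrp :: "nat \<Rightarrow> 'k::field \<Rightarrow> tauto set" for n \<alpha> where
  G_id: "id \<in> Ggrp n \<alpha>"
| G_a: "act_a \<in> Ggrp n \<alpha>"
| G_iota: "iota n \<alpha> \<beta> \<in> Ggrp n \<alpha>"
| G_comp: "g \<in> Ggrp n \<alpha> \<Longrightarrow> h \<in> Ggrp n \<alpha> \<Longrightarrow> g \<circ> h \<in> Ggrp n \<alpha>"
| G_inv: "g \<in> Ggrp n \<alpha> \<Longrightarrow> inv g \<in> Ggrp n \<alpha>"

definition N0 :: "nat \<Rightarrow> 'k::field \<Rightarrow> tauto set" where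
  "N0 n \<alpha> = range (iota n \<alpha>)"

text \<open>Restriction (section) g|_x, defined by g(x w) = g(x) g|_x(w).\<close>
definition restr :: "tauto \<Rightarrow> word \<Rightarrow> tauto" where
  "restr g x = (\<lambda>w. drop (length x) (g (x @ w)))"

definition pref :: "iword \<Rightarrow> nat \<Rightarrow> word" where
  "pref w k = map w [0..<k]"

definition cyl :: "word \<Rightarrow> iword set" where
  "cyl \<eta> = {w. pref w (length \<eta>) = \<eta>}"

definition ones :: iword where
  "ones = (\<lambda>_. True)"

definition cantor_open :: "iword set \<Rightarrow> bool" where
  "cantor_open U \<longleftrightarrow> (\<forall>w\<in>U. \<exists>k. cyl (pref w k) \<subseteq> U)"

type_synonym triple = "word \<times> tauto \<times> word"

text \<open>Nonzero elements of the inverse semigroup.\<close>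
definition Striples :: "nat \<Rightarrow> 'k::field \<Rightarrow> triple set" where
  "Striples n \<alpha> = {(\<eta>, g, \<mu>). g \<in> Ggrp n \<alpha>}"

definition dom_tr :: "triple \<Rightarrow> iword set" where
  "dom_tr s = (case s of (\<eta>, g, \<mu>) \<Rightarrow> cyl \<mu>)"

definition germ_reps :: "nat \<Rightarrow> 'k::field \<Rightarrow> (triple \<times> iword) set" where
  "germ_reps n \<alpha> = {(s, w). s \<in> Striples n \<alpha> \<and> w \<in> dom_tr s}"

definition germ_rel :: "triple \<times> iword \<Rightarrow> triple \<times> iword \<Rightarrow> bool" where
  "germ_rel p q = (case p of ((\<eta>, g, \<mu>), w) \<Rightarrow> case q of ((\<eta>', g', \<mu>'), w') \<Rightarrow>
     w = w' \<and> (\<exists>k \<epsilon> \<epsilon>'. pref w k = \<mu> @ \<epsilon> \<and> pref w k = \<mu>' @ \<epsilon>' \<and>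
        \<eta> @ g \<epsilon> = \<eta>' @ g' \<epsilon>' \<and> restr g \<epsilon> = restr g' \<epsilon>'))"

definition germ :: "nat \<Rightarrow> 'k::field \<Rightarrow> triple \<Rightarrow> iword \<Rightarrow> (triple \<times> iword) set" where
  "germ n \<alpha> s w = {q \<in> germ_reps n \<alpha>. germ_rel (s, w) q}"

definition Theta :: "nat \<Rightarrow> 'k::field \<Rightarrow> triple \<Rightarrow> iword set \<Rightarrow> (triple \<times> iword) set set" where
  "Theta n \<alpha> s U = germ n \<alpha> s ` U"

text \<open>The basis of open bisections, and the topology of the groupoid of germs G_n
  (its underlying set = union of the basis = all germs).\<close>
definition Theta_basis :: "nat \<Rightarrow> 'k::field \<Rightarrow> (triple \<times> iword) set set set" where
  "Theta_basis n \<alpha> = {Theta n \<alpha> s U | s U. s \<in> Striples n \<alpha> \<and> cantor_open U \<and> U \<subseteq> dom_tr s}"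

definition Gtop :: "nat \<Rightarrow> 'k::field \<Rightarrow> (triple \<times> iword) set topology" where
  "Gtop n \<alpha> = topology_generated_by (Theta_basis n \<alpha>)"

end

(*
  If [\<iota>(\<beta>), 1\<^sup>\<infinity>] lies in the closure of D, germs of D approach it at points with ever
  longer prefixes of ones; comparing the two germs there forces \<mu>\<eta> and \<gamma> to be words of ones
  and g to fix the ray 1\<^sup>\<infinity>. Conversely, the sections of every element of the group along
  1\<^sup>\<infinity> eventually lie in N\<^sub>0\<^sub>,\<^sub>n; say the section of g at 1\<^sup>K is \<iota>(y). At the point
  1\<^sup>p 0 1\<^sup>\<infinity> with p = |\<mu>| + K + r the germs of \<iota>(\<beta>') and of (\<gamma>, g, \<mu>) coincide as soon as
  Tr(\<alpha>\<^sup>p \<beta>') = Tr(\<alpha>\<^sup>r y), i.e. Tr(\<alpha>\<^sup>r c) = 0 for a fixed c. Because \<alpha> generates the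
  multiplicative group and, for n \<ge> 2, the trace vanishes at some nonzero element, such r
  exist beyond any bound, so every \<iota>(\<beta>') lies in the closure as well.
*)
theory Submission
  imports Defs "HOL-Computational_Algebra.Primes"
begin

section \<open>Finite fields of characteristic two\<close>

lemma finite_field_power_card:
  fixes x :: "'k::{field,finite}"
  shows "x ^ CARD('k) = x"
proof (cases "x = 0")
  case False
  have "x * (\<Prod>y\<in>UNIV-{0}. x * y) = x * x ^ (CARD('k) - 1) * \<Prod>(UNIV-{0})"
    by (simp add: prod.distrib mult_ac)
  also have "x * x ^ (CARD('k) - 1) = x ^ CARD('k)"
    using finite_UNIV_card_ge_0[where 'a='k] by (simp flip: power_Suc)
  also have "(\<Prod>y\<in>UNIV-{0}. x * y) = (\<Prod>y\<in>UNIV-{0}. y)"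
    by (rule prod.reindex_bij_witness[of _ "\<lambda>y. y / x" "\<lambda>y. x * y"]) (use False in auto)
  finally show ?thesis
    by simp
qed (use finite_UNIV_card_ge_0[where 'a='k] in auto)

lemma finite_field_power_card_minus_1:
  fixes x :: "'k::{field,finite}"
  assumes "x \<noteq> 0"
  shows "x ^ (CARD('k) - 1) = 1"
proof -
  have "x * x ^ (CARD('k) - 1) = x * 1"
    using finite_field_power_card[of x] finite_UNIV_card_ge_0[where 'a='k]
    by (simp flip: power_Suc)
  then show ?thesis
    using assms by simp
qed

lemma CHAR_eq_2_if_card_power_2:
  assumes "CARD('k::{field,finite}) = 2 ^ n"
  shows "CHAR('k) = 2"
proof -
  have "card {0, 1::'k} \<le> CARD('k)"
    by (rule card_mono) simp_all
  then have "n \<noteq> 0"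
    using assms by (cases n) auto
  then have "(-1::'k) ^ CARD('k) = 1"
    using assms by simp
  then have "of_nat 2 = (0::'k)"
    using finite_field_power_card[of "-1::'k"] by (simp add: eq_neg_iff_add_eq_0)
  then have "CHAR('k) dvd 2"
    by (simp only: of_nat_eq_0_iff_char_dvd)
  moreover have "CHAR('k) \<noteq> 1"
    by simp
  ultimately show ?thesis
    using prime_nat_iff two_is_prime_nat by blast
qed

lemma trace_zero [simp]: "trace n (0::'k::field) = 0"
  by (simp add: trace_def zero_power)

lemma trace_add:
  fixes x y :: "'k::field"
  assumes "CHAR('k) = 2"
  shows "trace n (x + y) = trace n x + trace n y"
  unfolding trace_def using assms
  by (simp add: freshmans_dream' sum.distrib)

lemma trace_eq_if_trace_add_eq_0:
  fixes x y :: "'k::field"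
  assumes "CHAR('k) = 2" and "trace n (x + y) = 0"
  shows "trace n x = trace n y"
  using assms trace_add[where n=n and x=x and y=y] uminus_CHAR_2[where x="trace n y"]
  by (simp add: add_eq_0_iff)

lemma trace_0_or_1:
  fixes x :: "'k::{field,finite}"
  assumes card: "CARD('k) = 2 ^ n"
  shows "trace n x = 0 \<or> trace n x = 1"
proof -
  have char: "CHAR('k) = 2"
    using card by (rule CHAR_eq_2_if_card_power_2)
  have "trace n x ^ 2 = (\<Sum>i<n. x ^ 2 ^ Suc i)"
    unfolding trace_def using char
    by (simp add: freshmans_dream_sum flip: power_mult) (simp add: mult.commute)
  also have "\<dots> + x = (\<Sum>i<Suc n. x ^ 2 ^ i)"
    by (simp add: sum.lessThan_Suc_shift del: sum.lessThan_Suc)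
  also have "\<dots> = trace n x + x ^ 2 ^ n"
    by (simp add: trace_def)
  also have "x ^ 2 ^ n = x"
    using card finite_field_power_card[of x] by simp
  finally have "trace n x * (trace n x - 1) = 0"
    by (simp add: power2_eq_square algebra_simps)
  then show ?thesis
    by auto
qed

lemma exists_neq_0_neq_1:
  assumes "CARD('k) = 2 ^ n" and "2 \<le> n"
  obtains y :: "'k::{field,finite}" where "y \<noteq> 0" and "y \<noteq> 1"
proof -
  have "card {0, 1::'k} < 2 ^ 2"
    by (simp add: card_insert_if)
  also have "(2::nat) ^ 2 \<le> 2 ^ n"
    using assms(2) by (rule power_increasing) simp
  also have "\<dots> = CARD('k)"
    using assms(1) by simp
  finally have "\<not> UNIV \<subseteq> {0, 1::'k}"
    by (meson card_mono finite.emptyI finite.insertI not_le)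
  then show ?thesis
    using that by blast
qed

lemma exists_nonzero_trace_eq_0:
  assumes card: "CARD('k) = 2 ^ n" and "2 \<le> n"
  obtains c :: "'k::{field,finite}" where "c \<noteq> 0" and "trace n c = 0"
proof -
  have char: "CHAR('k) = 2"
    using card by (rule CHAR_eq_2_if_card_power_2)
  obtain y :: 'k where y: "y \<noteq> 0" "y \<noteq> 1"
    using exists_neq_0_neq_1 assms by blast
  consider "trace n (1::'k) = 0" | "trace n y = 0" | "trace n (1::'k) = 1" "trace n y = 1"
    using trace_0_or_1[OF card] by blast
  then show ?thesis
  proof cases
    case 1
    then show ?thesis
      using that[of 1] by simp
  next
    case 2
    then show ?thesis
      using that[of y] y by simp
  next
    case 3
    have "1 + y \<noteq> 0"
      using y uminus_CHAR_2[OF char, of 1] by (auto simp: add_eq_0_iff)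
    moreover have "trace n (1 + y) = 0"
      using 3 trace_add[OF char] uminus_CHAR_2[OF char, of 1] by (simp add: eq_neg_iff_add_eq_0[symmetric])
    ultimately show ?thesis
      using that by blast
  qed
qed

lemma generator_large_power_eq:
  fixes \<alpha> :: "'k::{field,finite}"
  assumes gen: "\<forall>x::'k. x \<noteq> 0 \<longrightarrow> (\<exists>i. x = \<alpha> ^ i)"
    and "\<alpha> \<noteq> 0" "e \<noteq> 0" "c \<noteq> 0"
  obtains r where "r \<ge> M" and "\<alpha> ^ r * e = c"
proof -
  obtain i where i: "\<alpha> ^ i = c / e"
    using gen assms(3,4) by (metis divide_eq_0_iff)
  have "card {0, 1::'k} \<le> CARD('k)"
    by (rule card_mono) simp_all
  then have "M \<le> (CARD('k) - 1) * M"
    by (simp add: Suc_le_eq)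
  define r where "r = i + (CARD('k) - 1) * M"
  have "\<alpha> ^ r = \<alpha> ^ i * (\<alpha> ^ (CARD('k) - 1)) ^ M"
    by (simp only: r_def power_add power_mult)
  also have "\<dots> = \<alpha> ^ i"
    using finite_field_power_card_minus_1[OF assms(2)] by simp
  finally have "\<alpha> ^ r * e = c"
    using i assms(3) by simp
  moreover have "M \<le> r"
    unfolding r_def using \<open>M \<le> (CARD('k) - 1) * M\<close> by linarith
  ultimately show ?thesis
    using that by blast
qed

lemma exists_power_trace_eq_0:
  fixes \<alpha> e :: "'k::{field,finite}"
  assumes card: "CARD('k) = 2 ^ n" and "2 \<le> n"
    and gen: "\<forall>x::'k. x \<noteq> 0 \<longrightarrow> (\<exists>i. x = \<alpha> ^ i)"
  obtains r where "r \<ge> M" and "trace n (\<alpha> ^ r * e) = 0"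
proof (cases "e = 0")
  case False
  obtain y :: 'k where "y \<noteq> 0" "y \<noteq> 1"
    using exists_neq_0_neq_1 card \<open>2 \<le> n\<close> by blast
  then have "\<alpha> \<noteq> 0"
    using gen by (metis power_0 zero_power neq0_conv)
  obtain c :: 'k where "c \<noteq> 0" "trace n c = 0"
    using exists_nonzero_trace_eq_0 card \<open>2 \<le> n\<close> by blast
  then show ?thesis
    using generator_large_power_eq[OF gen \<open>\<alpha> \<noteq> 0\<close> False \<open>c \<noteq> 0\<close>] that by metis
qed (use that[of M] in simp)

lemma restr_Nil [simp]: "restr g [] = g"
  by (simp add: restr_def)

lemma restr_append: "restr g (u @ v) = restr (restr g u) v"
  by (simp add: restr_def fun_eq_iff add.commute)

lemma restr_id [simp]: "restr id u = id"
  by (simp add: restr_def fun_eq_iff)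

lemma restr_act_a_Cons [simp]: "restr act_a (x # u) = id"
  by (simp add: restr_def fun_eq_iff)

lemma restr_iota_True: "restr (iota n \<alpha> \<beta>) (True # u) = restr (iota n \<alpha> (\<alpha> * \<beta>)) u"
  by (simp add: restr_def fun_eq_iff)

lemma restr_iota_False:
  "restr (iota n \<alpha> \<beta>) (False # u) = restr (if trace n \<beta> = 1 then act_a else id) u"
  by (simp add: restr_def fun_eq_iff)

lemma iota_replicate_True:
  "iota n \<alpha> \<beta> (replicate K True @ x) = replicate K True @ iota n \<alpha> (\<alpha> ^ K * \<beta>) x"
  by (induction K arbitrary: \<beta>) (simp_all add: mult_ac)

lemma iota_replicate_True_Nil [simp]: "iota n \<alpha> \<beta> (replicate K True) = replicate K True"
  using iota_replicate_True[of n \<alpha> \<beta> K "[]"] by simp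

lemma restr_iota_replicate_True:
  "restr (iota n \<alpha> \<beta>) (replicate K True) = iota n \<alpha> (\<alpha> ^ K * \<beta>)"
  by (simp add: restr_def fun_eq_iff iota_replicate_True)

lemma restr_iota_dip:
  "restr (iota n \<alpha> \<beta>) (replicate K True @ [False]) = (if trace n (\<alpha> ^ K * \<beta>) = 1 then act_a else id)"
  by (simp add: restr_append restr_iota_replicate_True restr_iota_False)

lemma length_act_a [simp]: "length (act_a w) = length w"
  by (cases w) simp_all

lemma act_a_act_a [simp]: "act_a (act_a w) = w"
  by (cases w) simp_all

lemma iota_iota [simp]: "iota n \<alpha> \<beta> (iota n \<alpha> \<beta> w) = w"
  by (induction n \<alpha> \<beta> w rule: iota.induct) simp_all

lemma iota_zero [simp]: "iota n \<alpha> 0 = id"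
proof
  show "iota n \<alpha> 0 w = id w" for w
  proof (induction w)
    case (Cons x w)
    then show ?case
      by (cases x) simp_all
  qed simp
qed

lemma iota_iota_add:
  fixes y z :: "'k::field"
  assumes char: "CHAR('k) = 2" and trace_01: "\<And>x::'k. trace n x = 0 \<or> trace n x = 1"
  shows "iota n \<alpha> y (iota n \<alpha> z w) = iota n \<alpha> (y + z) w"
proof (induction w arbitrary: y z)
  case (Cons x w)
  have "(2::'k) = 0"
    using char of_nat_CHAR[where 'a='k] by simp
  then have "(trace n (y + z) = 1) \<longleftrightarrow> (trace n y = 1) \<noteq> (trace n z = 1)"
    using trace_add[OF char, of n y z] trace_01[of y] trace_01[of z] by auto
  then show ?case
    using Cons by (cases x; cases "trace n y = 1"; cases "trace n z = 1") (simp_all add: distrib_left)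
qed simp

section \<open>Tree endomorphisms\<close>

definition tree_endomorphism :: "tauto \<Rightarrow> bool" where
  "tree_endomorphism g \<longleftrightarrow>
     (\<forall>u. length (g u) = length u) \<and> (\<forall>u v. take (length u) (g (u @ v)) = g u)"

lemma tree_endomorphism_length: "tree_endomorphism g \<Longrightarrow> length (g u) = length u"
  by (simp add: tree_endomorphism_def)

lemma tree_endomorphism_append:
  "tree_endomorphism g \<Longrightarrow> g (u @ v) = g u @ restr g u v"
  unfolding tree_endomorphism_def restr_def by (metis append_take_drop_id)

lemma tree_endomorphism_take:
  assumes "tree_endomorphism g"
  shows "take j (g u) = g (take j u)"
proof (cases "j \<le> length u")
  case True
  then show ?thesis
    using assms tree_endomorphism_append[OF assms, of "take j u" "drop j u"]
    by (simp add: tree_endomorphism_length)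
next
  case False
  then show ?thesis
    using tree_endomorphism_length[OF assms, of u] by simp
qed

lemma restr_comp:
  assumes "tree_endomorphism h"
  shows "restr (g \<circ> h) u = restr g (h u) \<circ> restr h u"
  using tree_endomorphism_append[OF assms] tree_endomorphism_length[OF assms]
  by (simp add: restr_def fun_eq_iff)

lemma tree_endomorphism_id: "tree_endomorphism id"
  by (simp add: tree_endomorphism_def)

lemma tree_endomorphism_act_a: "tree_endomorphism act_a"
proof -
  have "take (length u) (act_a (u @ v)) = act_a u" for u v
    by (cases u) simp_all
  then show ?thesis
    by (simp add: tree_endomorphism_def)
qed

lemma tree_endomorphism_iota: "tree_endomorphism (iota n \<alpha> \<beta>)"
proof -
  have "length (iota n \<alpha> \<beta> u) = length u" for u
    by (induction n \<alpha> \<beta> u rule: iota.induct) simp_all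
  moreover have "take (length u) (iota n \<alpha> \<beta> (u @ v)) = iota n \<alpha> \<beta> u" for u v
  proof (induction u arbitrary: \<beta>)
    case (Cons x u)
    then show ?case
      using tree_endomorphism_take[OF tree_endomorphism_act_a] by (cases x) simp_all
  qed simp
  ultimately show ?thesis
    by (simp add: tree_endomorphism_def)
qed

lemma tree_endomorphism_comp:
  assumes "tree_endomorphism g" and "tree_endomorphism h"
  shows "tree_endomorphism (g \<circ> h)"
  using assms by (simp add: tree_endomorphism_def tree_endomorphism_take)

lemma tree_endomorphism_inv:
  assumes "bij g" and g: "tree_endomorphism g"
  shows "tree_endomorphism (inv g)"
proof -
  have g_inv: "g (inv g w) = w" for w
    using assms(1) by (simp add: bij_is_surj surj_f_inv_f)
  have length_inv: "length (inv g u) = length u" for u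
    using tree_endomorphism_length[OF g, of "inv g u"] g_inv by simp
  have "take (length u) (inv g (u @ v)) = inv g u" for u v
  proof -
    let ?x = "take (length u) (inv g (u @ v))"
    have "g ?x = take (length u) (u @ v)"
      using tree_endomorphism_take[OF g] g_inv by metis
    then have "g ?x = u"
      by simp
    then show ?thesis
      using assms(1) by (metis bij_is_inj inv_f_f)
  qed
  then show ?thesis
    using length_inv by (simp add: tree_endomorphism_def)
qed

lemma Ggrp_bij: "g \<in> Ggrp n \<alpha> \<Longrightarrow> bij g"
proof (induction rule: Ggrp.induct)
  case G_a
  have "act_a \<circ> act_a = id"
    by (simp add: fun_eq_iff)
  then show ?case
    by (metis o_bij)
next
  case (G_iota \<beta>)
  have "iota n \<alpha> \<beta> \<circ> iota n \<alpha> \<beta> = id"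
    by (simp add: fun_eq_iff)
  then show ?case
    by (metis o_bij)
qed (blast intro: bij_id bij_comp bij_imp_bij_inv)+

lemma Ggrp_tree_endomorphism: "g \<in> Ggrp n \<alpha> \<Longrightarrow> tree_endomorphism g"
  by (induction rule: Ggrp.induct)
    (blast intro: tree_endomorphism_id tree_endomorphism_act_a tree_endomorphism_iota
      tree_endomorphism_comp tree_endomorphism_inv Ggrp_bij)+

section \<open>Sections along rays of ones\<close>

definition N0_sections_along_ones :: "nat \<Rightarrow> 'k::field \<Rightarrow> tauto \<Rightarrow> bool" where
  "N0_sections_along_ones n \<alpha> g \<longleftrightarrow> (\<forall>u. \<exists>K. restr g (u @ replicate K True) \<in> N0 n \<alpha>)"

lemma id_in_N0: "id \<in> N0 n \<alpha>"
  unfolding N0_def by (metis iota_zero rangeI)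

lemma N0_sections_along_ones_id: "N0_sections_along_ones n \<alpha> id"
  unfolding N0_sections_along_ones_def using id_in_N0 by simp

lemma N0_sections_along_ones_act_a: "N0_sections_along_ones n \<alpha> act_a"
proof -
  have "restr act_a (u @ replicate 1 True) = id" for u
    by (cases u) simp_all
  then show ?thesis
    unfolding N0_sections_along_ones_def using id_in_N0 by metis
qed

lemma N0_sections_along_ones_iota: "N0_sections_along_ones n \<alpha> (iota n \<alpha> \<beta>)"
  unfolding N0_sections_along_ones_def
proof
  show "\<exists>K. restr (iota n \<alpha> \<beta>) (u @ replicate K True) \<in> N0 n \<alpha>" for u
  proof (induction u arbitrary: \<beta>)
    case Nil
    have "restr (iota n \<alpha> \<beta>) ([] @ replicate 0 True) \<in> N0 n \<alpha>"
      by (simp add: N0_def)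
    then show ?case ..
  next
    case (Cons x u)
    show ?case
    proof (cases x)
      case True
      then show ?thesis
        using Cons.IH by (simp add: restr_iota_True)
    next
      case False
      have "restr (iota n \<alpha> \<beta>) (False # u @ replicate 1 True) = id"
        by (cases u) (simp_all add: restr_iota_False)
      then show ?thesis
        using False id_in_N0 by (metis append_Cons)
    qed
  qed
qed

lemma N0_sections_along_ones_comp:
  fixes \<alpha> :: "'k::field"
  assumes char: "CHAR('k) = 2" and trace_01: "\<And>x::'k. trace n x = 0 \<or> trace n x = 1"
    and g: "N0_sections_along_ones n \<alpha> g"
    and h: "N0_sections_along_ones n \<alpha> h" "tree_endomorphism h"
  shows "N0_sections_along_ones n \<alpha> (g \<circ> h)"
  unfolding N0_sections_along_ones_def
proof
  fix u
  obtain K1 y1 where y1: "restr h (u @ replicate K1 True) = iota n \<alpha> y1"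
    using h(1) unfolding N0_sections_along_ones_def N0_def by blast
  define u' where "u' = h (u @ replicate K1 True)"
  obtain K2 y2 where y2: "restr g (u' @ replicate K2 True) = iota n \<alpha> y2"
    using g unfolding N0_sections_along_ones_def N0_def by blast
  let ?v = "u @ replicate K1 True @ replicate K2 True"
  have "h ?v = u' @ replicate K2 True"
    using tree_endomorphism_append[OF h(2), of "u @ replicate K1 True"]
    by (simp add: u'_def y1)
  moreover have "restr h ?v = iota n \<alpha> (\<alpha> ^ K2 * y1)"
    by (simp add: restr_append[of h "u @ replicate K1 True", simplified] y1 restr_iota_replicate_True)
  ultimately have "restr (g \<circ> h) ?v = iota n \<alpha> (y2 + \<alpha> ^ K2 * y1)"
    by (simp add: restr_comp[OF h(2)] y2 fun_eq_iff iota_iota_add[OF char trace_01])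
  then show "\<exists>K. restr (g \<circ> h) (u @ replicate K True) \<in> N0 n \<alpha>"
    by (metis N0_def rangeI replicate_add append_assoc)
qed

lemma Ggrp_N0_sections_along_ones:
  fixes \<alpha> :: "'k::field"
  assumes char: "CHAR('k) = 2" and trace_01: "\<And>x::'k. trace n x = 0 \<or> trace n x = 1"
    and "g \<in> Ggrp n \<alpha>"
  shows "N0_sections_along_ones n \<alpha> g \<and> N0_sections_along_ones n \<alpha> (inv g)"
  \<comment> \<open>The property does not pass from g to inv g directly, so inverses are carried along.\<close>
  using assms(3)
proof (induction rule: Ggrp.induct)
  case G_id
  then show ?case
    using N0_sections_along_ones_id by (metis inv_id)
next
  case G_a
  have "inv act_a = act_a"
    by (rule inv_unique_comp) (simp_all add: fun_eq_iff)
  then show ?case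
    using N0_sections_along_ones_act_a by simp
next
  case (G_iota \<beta>)
  have "inv (iota n \<alpha> \<beta>) = iota n \<alpha> \<beta>"
    by (rule inv_unique_comp) (simp_all add: fun_eq_iff)
  then show ?case
    using N0_sections_along_ones_iota by simp
next
  case (G_comp g h)
  have "inv (g \<circ> h) = inv h \<circ> inv g"
    using G_comp.hyps by (simp add: o_inv_distrib Ggrp_bij)
  moreover have "tree_endomorphism h" "tree_endomorphism (inv g)"
    using G_comp.hyps Ggrp.G_inv[of g n \<alpha>] by (simp_all add: Ggrp_tree_endomorphism)
  ultimately show ?case
    using G_comp.IH N0_sections_along_ones_comp[OF char trace_01] by metis
next
  case (G_inv g)
  then show ?case
    by (simp add: inv_inv_eq Ggrp_bij)
qed

lemma length_pref [simp]: "length (pref w k) = k"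
  by (simp add: pref_def)

lemma take_pref [simp]: "take j (pref w k) = pref w (min j k)"
  by (simp add: pref_def take_map min_def)

lemma pref_eq_le:
  assumes "pref v k = pref w k" and "j \<le> k"
  shows "pref v j = pref w j"
  using arg_cong[OF assms(1), of "take j"] assms(2) by (simp add: min_absorb1)

lemma pref_add: "pref w (k + d) = pref w k @ map w [k..<k + d]"
  unfolding pref_def by (simp add: upt_add_eq_append[of 0 k d])

lemma in_cyl_iff: "w \<in> cyl p \<longleftrightarrow> pref w (length p) = p"
  by (simp add: cyl_def)

lemma in_cyl_pref_iff: "v \<in> cyl (pref w k) \<longleftrightarrow> pref v k = pref w k"
  by (simp add: in_cyl_iff)

lemma in_cyl_if_pref_eq_append:
  assumes "pref w k = p @ q"
  shows "w \<in> cyl p"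
proof -
  have "length p \<le> k"
    using arg_cong[OF assms, of length] by simp
  then show ?thesis
    using arg_cong[OF assms, of "take (length p)"] by (simp add: in_cyl_iff min_absorb1)
qed

lemma cyl_Nil [simp]: "cyl [] = UNIV"
  by (simp add: cyl_def pref_def)

lemma cyl_append_subset: "cyl (p @ q) \<subseteq> cyl p"
  by (auto simp: in_cyl_iff intro: in_cyl_if_pref_eq_append)

lemma pref_ones [simp]: "pref ones m = replicate m True"
  by (simp add: pref_def ones_def map_replicate_const)

lemma pref_dip:
  shows "j \<le> p \<Longrightarrow> pref (\<lambda>i. i \<noteq> p) j = replicate j True"
    and "pref (\<lambda>i. i \<noteq> p) (Suc p) = replicate p True @ [False]"
proof -
  show ones: "pref (\<lambda>i. i \<noteq> p) j = replicate j True" if "j \<le> p" for j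
    using that by (induction j) (simp_all add: pref_def replicate_append_same)
  show "pref (\<lambda>i. i \<noteq> p) (Suc p) = replicate p True @ [False]"
    using ones[of p] by (simp add: pref_def)
qed

lemma cantor_open_cyl: "cantor_open (cyl p)"
  unfolding cantor_open_def by (metis in_cyl_iff order_refl)

section \<open>Germs\<close>

definition germ_rel_at :: "nat \<Rightarrow> triple \<Rightarrow> triple \<Rightarrow> iword \<Rightarrow> bool" where
  "germ_rel_at k s s' w \<longleftrightarrow> (case s of (\<eta>, g, \<mu>) \<Rightarrow> case s' of (\<eta>', g', \<mu>') \<Rightarrow>
     (\<exists>\<epsilon> \<epsilon>'. pref w k = \<mu> @ \<epsilon> \<and> pref w k = \<mu>' @ \<epsilon>' \<and>
        \<eta> @ g \<epsilon> = \<eta>' @ g' \<epsilon>' \<and> restr g \<epsilon> = restr g' \<epsilon>'))"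

lemma germ_rel_iff:
  "germ_rel (s, w) (s', w') \<longleftrightarrow> w = w' \<and> (\<exists>k. germ_rel_at k s s' w)"
  by (cases s; cases s') (auto simp: germ_rel_def germ_rel_at_def)

lemma germ_rel_at_sym: "germ_rel_at k s s' w \<Longrightarrow> germ_rel_at k s' s w"
  by (cases s; cases s') (auto simp: germ_rel_at_def)

lemma germ_rel_at_pref_cong: "pref v k = pref w k \<Longrightarrow> germ_rel_at k s s' w \<Longrightarrow> germ_rel_at k s s' v"
  by (cases s; cases s') (simp add: germ_rel_at_def)

lemma germ_rel_at_in_dom_tr: "germ_rel_at k s s' w \<Longrightarrow> w \<in> dom_tr s \<and> w \<in> dom_tr s'"
  by (cases s; cases s') (auto simp: germ_rel_at_def dom_tr_def intro: in_cyl_if_pref_eq_append)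

lemma germ_rel_at_mono:
  assumes g: "tree_endomorphism g" and g': "tree_endomorphism g'"
    and rel: "germ_rel_at k (\<eta>, g, \<mu>) (\<eta>', g', \<mu>') w" and "k \<le> k'"
  shows "germ_rel_at k' (\<eta>, g, \<mu>) (\<eta>', g', \<mu>') w"
proof -
  obtain \<epsilon> \<epsilon>' where \<epsilon>: "pref w k = \<mu> @ \<epsilon>" "pref w k = \<mu>' @ \<epsilon>'"
    and words: "\<eta> @ g \<epsilon> = \<eta>' @ g' \<epsilon>'" and sections: "restr g \<epsilon> = restr g' \<epsilon>'"
    using rel unfolding germ_rel_at_def by auto
  define x where "x = map w [k..<k']"
  have "pref w k' = pref w k @ x"
    using pref_add[of w k "k' - k"] \<open>k \<le> k'\<close> by (simp add: x_def)
  then have "pref w k' = \<mu> @ (\<epsilon> @ x)" "pref w k' = \<mu>' @ (\<epsilon>' @ x)"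
    using \<epsilon> by simp_all
  moreover have "\<eta> @ g (\<epsilon> @ x) = \<eta>' @ g' (\<epsilon>' @ x)"
    using words sections by (simp add: tree_endomorphism_append[OF g] tree_endomorphism_append[OF g'])
  moreover have "restr g (\<epsilon> @ x) = restr g' (\<epsilon>' @ x)"
    using sections by (simp add: restr_append)
  ultimately show ?thesis
    unfolding germ_rel_at_def by blast
qed

lemma germ_rel_at_trans:
  assumes "tree_endomorphism g1" "tree_endomorphism g2" "tree_endomorphism g3"
    and "germ_rel_at k1 (\<eta>1, g1, \<mu>1) (\<eta>2, g2, \<mu>2) w" "germ_rel_at k2 (\<eta>2, g2, \<mu>2) (\<eta>3, g3, \<mu>3) w"
  shows "germ_rel_at (max k1 k2) (\<eta>1, g1, \<mu>1) (\<eta>3, g3, \<mu>3) w"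
proof -
  have "germ_rel_at (max k1 k2) (\<eta>1, g1, \<mu>1) (\<eta>2, g2, \<mu>2) w"
    "germ_rel_at (max k1 k2) (\<eta>2, g2, \<mu>2) (\<eta>3, g3, \<mu>3) w"
    using assms germ_rel_at_mono by (metis max.cobounded1 max.cobounded2)+
  then obtain \<epsilon>1 \<epsilon>2 \<epsilon>2' \<epsilon>3 where \<epsilon>:
    "pref w (max k1 k2) = \<mu>1 @ \<epsilon>1" "pref w (max k1 k2) = \<mu>2 @ \<epsilon>2"
    "\<eta>1 @ g1 \<epsilon>1 = \<eta>2 @ g2 \<epsilon>2" "restr g1 \<epsilon>1 = restr g2 \<epsilon>2"
    "pref w (max k1 k2) = \<mu>2 @ \<epsilon>2'" "pref w (max k1 k2) = \<mu>3 @ \<epsilon>3"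
    "\<eta>2 @ g2 \<epsilon>2' = \<eta>3 @ g3 \<epsilon>3" "restr g2 \<epsilon>2' = restr g3 \<epsilon>3"
    unfolding germ_rel_at_def by auto
  have "\<epsilon>2' = \<epsilon>2"
    using \<epsilon>(2,5) by (metis same_append_eq)
  then have "\<eta>1 @ g1 \<epsilon>1 = \<eta>3 @ g3 \<epsilon>3" "restr g1 \<epsilon>1 = restr g3 \<epsilon>3"
    using \<epsilon> by simp_all
  then show ?thesis
    using \<epsilon>(1,6) unfolding germ_rel_at_def by blast
qed

lemma germ_reps_iff: "((\<eta>, g, \<mu>), w) \<in> germ_reps n \<alpha> \<longleftrightarrow> g \<in> Ggrp n \<alpha> \<and> w \<in> cyl \<mu>"
  by (simp add: germ_reps_def Striples_def dom_tr_def)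

lemma germ_rel_refl:
  assumes "(s, w) \<in> germ_reps n \<alpha>"
  shows "germ_rel (s, w) (s, w)"
proof -
  obtain \<eta> g \<mu> where s: "s = (\<eta>, g, \<mu>)"
    by (metis prod.exhaust)
  then have "germ_rel_at (length \<mu>) s s w"
    using assms by (simp add: germ_reps_iff germ_rel_at_def in_cyl_iff)
  then show ?thesis
    by (auto simp: germ_rel_iff)
qed

lemma germ_rel_sym: "germ_rel p q \<Longrightarrow> germ_rel q p"
  by (cases p; cases q) (auto simp: germ_rel_iff intro: germ_rel_at_sym)

lemma germ_rel_trans:
  assumes "p \<in> germ_reps n \<alpha>" "q \<in> germ_reps n \<alpha>" "r \<in> germ_reps n \<alpha>"
    and "germ_rel p q" "germ_rel q r"
  shows "germ_rel p r"
proof -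
  obtain \<eta>1 g1 \<mu>1 w1 \<eta>2 g2 \<mu>2 w2 \<eta>3 g3 \<mu>3 w3
    where pqr: "p = ((\<eta>1, g1, \<mu>1), w1)" "q = ((\<eta>2, g2, \<mu>2), w2)" "r = ((\<eta>3, g3, \<mu>3), w3)"
    by (metis prod.exhaust)
  then have "tree_endomorphism g1" "tree_endomorphism g2" "tree_endomorphism g3"
    using assms(1-3) by (auto simp: germ_reps_iff intro: Ggrp_tree_endomorphism)
  then show ?thesis
    using assms(4,5) germ_rel_at_trans unfolding pqr germ_rel_iff by metis
qed

lemma germ_eq_iff:
  assumes "(s, w) \<in> germ_reps n \<alpha>" "(s', w') \<in> germ_reps n \<alpha>"
  shows "germ n \<alpha> s w = germ n \<alpha> s' w' \<longleftrightarrow> germ_rel (s, w) (s', w')"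
proof
  assume "germ n \<alpha> s w = germ n \<alpha> s' w'"
  moreover have "(s', w') \<in> germ n \<alpha> s' w'"
    using assms(2) germ_rel_refl by (simp add: germ_def)
  ultimately show "germ_rel (s, w) (s', w')"
    unfolding germ_def by blast
next
  assume "germ_rel (s, w) (s', w')"
  then show "germ n \<alpha> s w = germ n \<alpha> s' w'"
    unfolding germ_def using assms germ_rel_sym germ_rel_trans by blast
qed

lemma openin_Theta:
  assumes "s \<in> Striples n \<alpha>" "cantor_open U" "U \<subseteq> dom_tr s"
  shows "openin (Gtop n \<alpha>) (Theta n \<alpha> s U)"
  unfolding Gtop_def Theta_basis_def using assms by (intro topology_generated_by_Basis) blast

lemma germ_in_topspace:
  assumes "(s, w) \<in> germ_reps n \<alpha>"
  shows "germ n \<alpha> s w \<in> topspace (Gtop n \<alpha>)"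
proof -
  obtain \<eta> g \<mu> where s: "s = (\<eta>, g, \<mu>)"
    by (metis prod.exhaust)
  have "openin (Gtop n \<alpha>) (Theta n \<alpha> s (cyl \<mu>))"
    using assms by (intro openin_Theta) (auto simp: s germ_reps_def dom_tr_def cantor_open_cyl)
  moreover have "germ n \<alpha> s w \<in> Theta n \<alpha> s (cyl \<mu>)"
    using assms by (simp add: s Theta_def germ_reps_iff)
  ultimately show ?thesis
    using openin_subset by blast
qed

lemma Theta_contains_nearby_germs:
  assumes t: "t \<in> Striples n \<alpha>" "cantor_open U" "U \<subseteq> dom_tr t"
    and s: "(s, w) \<in> germ_reps n \<alpha>" and "germ n \<alpha> s w \<in> Theta n \<alpha> t U"
  shows "\<exists>k. \<forall>v. pref v k = pref w k \<longrightarrow> germ n \<alpha> s v \<in> Theta n \<alpha> t U"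
proof -
  obtain u where "u \<in> U" and eq: "germ n \<alpha> s w = germ n \<alpha> t u"
    using assms(5) by (auto simp: Theta_def)
  have tu: "(t, u) \<in> germ_reps n \<alpha>"
    using t \<open>u \<in> U\<close> by (auto simp: germ_reps_def)
  then have "germ_rel (t, u) (s, w)"
    using germ_eq_iff[OF tu s] eq by simp
  then obtain k1 where "u = w" and rel: "germ_rel_at k1 t s w"
    by (auto simp: germ_rel_iff)
  obtain k2 where k2: "cyl (pref w k2) \<subseteq> U"
    using t(2) \<open>u \<in> U\<close> \<open>u = w\<close> by (auto simp: cantor_open_def)
  have "germ n \<alpha> s v \<in> Theta n \<alpha> t U"
    if v: "pref v (max k1 k2) = pref w (max k1 k2)" for v
  proof -
    have "v \<in> U"
      using k2 pref_eq_le[OF v] by (auto simp: in_cyl_pref_iff)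
    have rel_v: "germ_rel_at k1 t s v"
      using germ_rel_at_pref_cong pref_eq_le[OF v] rel by simp
    have tv: "(t, v) \<in> germ_reps n \<alpha>" and sv: "(s, v) \<in> germ_reps n \<alpha>"
      using \<open>v \<in> U\<close> t s germ_rel_at_in_dom_tr[OF rel_v] by (auto simp: germ_reps_def)
    have "germ n \<alpha> t v = germ n \<alpha> s v"
      using germ_eq_iff[OF tv sv] rel_v by (auto simp: germ_rel_iff)
    then show ?thesis
      using \<open>v \<in> U\<close> by (metis Theta_def image_eqI)
  qed
  then show ?thesis
    by blast
qed

lemma openin_Gtop_contains_nearby_germs:
  assumes "openin (Gtop n \<alpha>) T" and "(s, w) \<in> germ_reps n \<alpha>" and "germ n \<alpha> s w \<in> T"
  shows "\<exists>k. \<forall>v. pref v k = pref w k \<longrightarrow> germ n \<alpha> s v \<in> T"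
proof -
  have "generate_topology_on (Theta_basis n \<alpha>) T"
    using assms(1) by (simp add: Gtop_def openin_topology_generated_by_iff)
  then show ?thesis
    using assms(3)
  proof (induction rule: generate_topology_on.induct)
    case (Int a b)
    then obtain k1 k2 where k:
      "\<forall>v. pref v k1 = pref w k1 \<longrightarrow> germ n \<alpha> s v \<in> a"
      "\<forall>v. pref v k2 = pref w k2 \<longrightarrow> germ n \<alpha> s v \<in> b"
      by auto
    have "germ n \<alpha> s v \<in> a \<inter> b" if "pref v (max k1 k2) = pref w (max k1 k2)" for v
      using k pref_eq_le[OF that] by simp
    then show ?case
      by blast
  next
    case (UN K)
    then obtain k where "k \<in> K" "germ n \<alpha> s w \<in> k"
      by auto
    then show ?case
      using UN.IH by blast
  next
    case (Basis b)
    then obtain t U where "b = Theta n \<alpha> t U" "t \<in> Striples n \<alpha>" "cantor_open U" "U \<subseteq> dom_tr t"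
      unfolding Theta_basis_def by blast
    then show ?case
      using Theta_contains_nearby_germs[OF _ _ _ assms(2)] Basis.prems by simp
  qed simp
qed

lemma in_closure_Theta_imp_nearby:
  assumes "germ n \<alpha> s x \<in> Gtop n \<alpha> closure_of Theta n \<alpha> t U"
    and s: "(s, x) \<in> germ_reps n \<alpha>" and t: "t \<in> Striples n \<alpha>" "U \<subseteq> dom_tr t"
  shows "\<exists>w\<in>U. pref w m = pref x m \<and> germ n \<alpha> t w = germ n \<alpha> s w"
proof -
  obtain \<eta> f \<mu> where s_def: "s = (\<eta>, f, \<mu>)"
    by (metis prod.exhaust)
  let ?m = "max m (length \<mu>)"
  have "cyl (pref x ?m) \<subseteq> dom_tr s"
  proof
    fix v
    assume "v \<in> cyl (pref x ?m)"
    then have "pref v (length \<mu>) = pref x (length \<mu>)"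
      using pref_eq_le[of v ?m x "length \<mu>"] by (simp add: in_cyl_pref_iff)
    then show "v \<in> dom_tr s"
      using s by (simp add: s_def dom_tr_def germ_reps_iff in_cyl_iff)
  qed
  then have "openin (Gtop n \<alpha>) (Theta n \<alpha> s (cyl (pref x ?m)))"
    using s by (intro openin_Theta) (auto simp: germ_reps_def cantor_open_cyl)
  moreover have "germ n \<alpha> s x \<in> Theta n \<alpha> s (cyl (pref x ?m))"
    by (simp add: Theta_def in_cyl_pref_iff)
  ultimately obtain y where "y \<in> Theta n \<alpha> t U" "y \<in> Theta n \<alpha> s (cyl (pref x ?m))"
    using assms(1) unfolding in_closure_of by blast
  then obtain w w' where w: "w \<in> U" "pref w' ?m = pref x ?m"
    and eq: "germ n \<alpha> t w = germ n \<alpha> s w'"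
    by (auto simp: Theta_def in_cyl_pref_iff)
  have tw: "(t, w) \<in> germ_reps n \<alpha>" and sw': "(s, w') \<in> germ_reps n \<alpha>"
    using t w \<open>cyl (pref x ?m) \<subseteq> dom_tr s\<close> s
    by (auto simp: germ_reps_def in_cyl_pref_iff)
  then have "w' = w"
    using eq germ_eq_iff[OF tw sw'] by (simp add: germ_rel_iff)
  then show ?thesis
    using w eq pref_eq_le[of w ?m x m] by auto
qed

section \<open>Germs at the ray of ones\<close>

lemma germ_rel_at_truncate:
  assumes f: "tree_endomorphism f" and g: "tree_endomorphism g"
    and rel: "germ_rel_at k ([], f, []) (\<gamma>, g, \<mu>) w" and "length \<mu> \<le> j" "j \<le> k"
  shows "f (pref w j) = \<gamma> @ g (drop (length \<mu>) (pref w j))"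
proof -
  obtain \<epsilon> where \<epsilon>: "pref w k = \<mu> @ \<epsilon>" and words: "f (pref w k) = \<gamma> @ g \<epsilon>"
    using rel by (auto simp: germ_rel_at_def)
  have "length \<gamma> = length \<mu>"
    using arg_cong[OF words, of length] arg_cong[OF \<epsilon>, of length]
    by (simp add: tree_endomorphism_length[OF f] tree_endomorphism_length[OF g])
  have "f (pref w j) = take j (f (pref w k))"
    using \<open>j \<le> k\<close> by (simp add: tree_endomorphism_take[OF f] min_absorb1)
  also have "\<dots> = \<gamma> @ g (take (j - length \<mu>) \<epsilon>)"
    using words \<open>length \<gamma> = length \<mu>\<close> \<open>length \<mu> \<le> j\<close> by (simp add: tree_endomorphism_take[OF g])
  also have "take (j - length \<mu>) \<epsilon> = drop (length \<mu>) (pref w j)"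
    using arg_cong[OF \<epsilon>, of "\<lambda>u. drop (length \<mu>) (take j u)"] \<open>j \<le> k\<close> \<open>length \<mu> \<le> j\<close>
    by (simp add: min_absorb1)
  finally show ?thesis .
qed

lemma ones_germ_in_closure_imp_ones:
  assumes g: "g \<in> Ggrp n \<alpha>"
    and closure: "germ n \<alpha> ([], iota n \<alpha> \<beta>, []) ones \<in>
      Gtop n \<alpha> closure_of Theta n \<alpha> (\<gamma>, g, \<mu>) (cyl (\<mu> @ \<eta>))"
  shows "\<mu> @ \<eta> = replicate (length (\<mu> @ \<eta>)) True
    \<and> \<gamma> @ g (replicate K True) = replicate (length \<mu> + K) True"
proof -
  have ones_reps: "(([], iota n \<alpha> \<beta>, []), ones) \<in> germ_reps n \<alpha>"
    by (simp add: germ_reps_iff Ggrp.G_iota)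
  define m where "m = length (\<mu> @ \<eta>) + K"
  obtain w where w: "w \<in> cyl (\<mu> @ \<eta>)" "pref w m = replicate m True"
    and eq: "germ n \<alpha> (\<gamma>, g, \<mu>) w = germ n \<alpha> ([], iota n \<alpha> \<beta>, []) w"
    using in_closure_Theta_imp_nearby[OF closure ones_reps, of m] g cyl_append_subset
    by (auto simp: Striples_def dom_tr_def)
  have "((\<gamma>, g, \<mu>), w) \<in> germ_reps n \<alpha>" "(([], iota n \<alpha> \<beta>, []), w) \<in> germ_reps n \<alpha>"
    using g w(1) cyl_append_subset[of \<mu> \<eta>] by (auto simp: germ_reps_iff Ggrp.G_iota)
  then obtain k where "germ_rel_at k ([], iota n \<alpha> \<beta>, []) (\<gamma>, g, \<mu>) w"
    using eq germ_eq_iff by (metis germ_rel_iff germ_rel_sym)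
  then have rel: "germ_rel_at (max k m) ([], iota n \<alpha> \<beta>, []) (\<gamma>, g, \<mu>) w"
    using germ_rel_at_mono tree_endomorphism_iota Ggrp_tree_endomorphism[OF g] by (metis max.cobounded1)
  have ones: "pref w j = replicate j True" if "j \<le> m" for j
    using arg_cong[OF w(2), of "take j"] that by (simp add: min_absorb1)
  have "\<mu> @ \<eta> = replicate (length (\<mu> @ \<eta>)) True"
    using w(1) ones[of "length (\<mu> @ \<eta>)"] by (simp add: in_cyl_iff m_def)
  moreover have "\<gamma> @ g (replicate K True) = replicate (length \<mu> + K) True"
    using germ_rel_at_truncate[OF tree_endomorphism_iota Ggrp_tree_endomorphism[OF g] rel,
        of "length \<mu> + K"] ones[of "length \<mu> + K"]
    by (simp add: m_def)
  ultimately show ?thesis ..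
qed

lemma ones_germ_in_closure_imp_ray_fixed:
  assumes g: "g \<in> Ggrp n \<alpha>"
    and closure: "germ n \<alpha> ([], iota n \<alpha> \<beta>, []) ones \<in>
      Gtop n \<alpha> closure_of Theta n \<alpha> (\<gamma>, g, \<mu>) (cyl (\<mu> @ \<eta>))"
  shows "\<mu> @ \<eta> = replicate (length (\<mu> @ \<eta>)) True"
    and "\<gamma> = replicate (length \<mu>) True"
    and "g (replicate K True) = replicate K True"
proof -
  note ones = ones_germ_in_closure_imp_ones[OF g closure]
  then show "\<mu> @ \<eta> = replicate (length (\<mu> @ \<eta>)) True"
    by blast
  show \<gamma>: "\<gamma> = replicate (length \<mu>) True"
    using ones[of 0] tree_endomorphism_length[OF Ggrp_tree_endomorphism[OF g], of "[]"] by simp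
  show "g (replicate K True) = replicate K True"
    using ones[of K] by (subst (asm) \<gamma>) (simp add: replicate_add)
qed

lemma germ_rel_at_dip:
  assumes g: "tree_endomorphism g" and g_fix: "g (replicate K True) = replicate K True"
    and g_section: "restr g (replicate K True) = iota n \<alpha> y"
    and traces: "trace n (\<alpha> ^ (j + K + r) * \<beta>) = trace n (\<alpha> ^ r * y)"
  shows "germ_rel_at (Suc (j + K + r)) ([], iota n \<alpha> \<beta>, []) (replicate j True, g, replicate j True)
    (\<lambda>i. i \<noteq> j + K + r)"
proof -
  let ?p = "j + K + r"
  define \<epsilon> where "\<epsilon> = replicate ?p True @ [False]"
  define \<epsilon>' where "\<epsilon>' = replicate K True @ replicate r True @ [False]"
  have "restr g \<epsilon>' = restr (iota n \<alpha> y) (replicate r True @ [False])"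
    by (simp only: \<epsilon>'_def restr_append[of g "replicate K True"] g_section)
  then have "restr (iota n \<alpha> \<beta>) \<epsilon> = restr g \<epsilon>'"
    using traces by (simp add: \<epsilon>_def restr_iota_dip)
  moreover have "pref (\<lambda>i. i \<noteq> ?p) (Suc ?p) = [] @ \<epsilon>"
    and "pref (\<lambda>i. i \<noteq> ?p) (Suc ?p) = replicate j True @ \<epsilon>'"
    by (simp_all add: pref_dip \<epsilon>_def \<epsilon>'_def replicate_add)
  moreover have "[] @ iota n \<alpha> \<beta> \<epsilon> = replicate j True @ g \<epsilon>'"
    by (simp add: \<epsilon>_def \<epsilon>'_def iota_replicate_True tree_endomorphism_append[OF g] g_fix g_section
        replicate_add)
  ultimately show ?thesis
    unfolding germ_rel_at_def by blast
qed

lemma dip_germ_in_Theta: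
  assumes g: "g \<in> Ggrp n \<alpha>" and g_fix: "g (replicate K True) = replicate K True"
    and g_section: "restr g (replicate K True) = iota n \<alpha> y"
    and ones_\<mu>\<eta>: "\<mu> @ \<eta> = replicate (length (\<mu> @ \<eta>)) True"
    and \<gamma>: "\<gamma> = replicate (length \<mu>) True"
    and traces: "trace n (\<alpha> ^ (length \<mu> + K + r) * \<beta>) = trace n (\<alpha> ^ r * y)"
    and "length (\<mu> @ \<eta>) \<le> length \<mu> + K + r"
  shows "germ n \<alpha> ([], iota n \<alpha> \<beta>, []) (\<lambda>i. i \<noteq> length \<mu> + K + r)
    \<in> Theta n \<alpha> (\<gamma>, g, \<mu>) (cyl (\<mu> @ \<eta>))"
proof -
  let ?p = "length \<mu> + K + r"
  let ?v = "\<lambda>i. i \<noteq> ?p"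
  have \<mu>: "\<mu> = replicate (length \<mu>) True"
    using arg_cong[OF ones_\<mu>\<eta>, of "take (length \<mu>)"] by simp
  have "?v \<in> cyl (\<mu> @ \<eta>)"
    using pref_dip(1)[of "length (\<mu> @ \<eta>)" ?p] ones_\<mu>\<eta> assms(7) by (simp add: in_cyl_iff)
  moreover have "germ_rel_at (Suc ?p) ([], iota n \<alpha> \<beta>, []) (\<gamma>, g, \<mu>) ?v"
    using germ_rel_at_dip[OF Ggrp_tree_endomorphism[OF g] g_fix g_section traces] \<gamma> \<mu> by metis
  moreover have "?v \<in> cyl \<mu>"
    using calculation(1) cyl_append_subset by blast
  ultimately have "germ n \<alpha> ([], iota n \<alpha> \<beta>, []) ?v = germ n \<alpha> (\<gamma>, g, \<mu>) ?v"
    using g germ_eq_iff[of "([], iota n \<alpha> \<beta>, [])" ?v n \<alpha> "(\<gamma>, g, \<mu>)" ?v]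
    by (auto simp: germ_reps_iff Ggrp.G_iota germ_rel_iff)
  then show ?thesis
    using \<open>?v \<in> cyl (\<mu> @ \<eta>)\<close> by (simp add: Theta_def)
qed

lemma ones_germ_in_closure_if_ray_fixed:
  fixes \<alpha> \<beta> :: "'k::{field,finite}"
  assumes "2 \<le> n" and card: "CARD('k) = 2 ^ n"
    and gen: "\<forall>x::'k. x \<noteq> 0 \<longrightarrow> (\<exists>i. x = \<alpha> ^ i)"
    and g: "g \<in> Ggrp n \<alpha>"
    and ones_\<mu>\<eta>: "\<mu> @ \<eta> = replicate (length (\<mu> @ \<eta>)) True"
    and \<gamma>: "\<gamma> = replicate (length \<mu>) True"
    and g_fix: "\<And>K. g (replicate K True) = replicate K True"
  shows "germ n \<alpha> ([], iota n \<alpha> \<beta>, []) ones \<in>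
    Gtop n \<alpha> closure_of Theta n \<alpha> (\<gamma>, g, \<mu>) (cyl (\<mu> @ \<eta>))"
  unfolding in_closure_of
proof (intro conjI allI impI)
  have ones_reps: "(([], iota n \<alpha> \<beta>, []), ones) \<in> germ_reps n \<alpha>"
    by (simp add: germ_reps_iff Ggrp.G_iota)
  then show "germ n \<alpha> ([], iota n \<alpha> \<beta>, []) ones \<in> topspace (Gtop n \<alpha>)"
    by (rule germ_in_topspace)
  fix T
  assume "germ n \<alpha> ([], iota n \<alpha> \<beta>, []) ones \<in> T \<and> openin (Gtop n \<alpha>) T"
  then obtain k where k: "\<And>v. pref v k = replicate k True \<Longrightarrow> germ n \<alpha> ([], iota n \<alpha> \<beta>, []) v \<in> T"
    using openin_Gtop_contains_nearby_germs[OF _ ones_reps] by auto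
  have char: "CHAR('k) = 2"
    using card by (rule CHAR_eq_2_if_card_power_2)
  obtain K y where g_section: "restr g ([] @ replicate K True) = iota n \<alpha> y"
    using Ggrp_N0_sections_along_ones[OF char trace_0_or_1[OF card] g]
    unfolding N0_sections_along_ones_def N0_def by blast
  obtain r where r: "r \<ge> k + length (\<mu> @ \<eta>)"
    and "trace n (\<alpha> ^ r * (\<alpha> ^ (length \<mu> + K) * \<beta> + y)) = 0"
    using exists_power_trace_eq_0[OF card \<open>2 \<le> n\<close> gen] by blast
  then have "trace n (\<alpha> ^ (length \<mu> + K + r) * \<beta>) = trace n (\<alpha> ^ r * y)"
    using trace_eq_if_trace_add_eq_0[OF char] by (simp add: power_add algebra_simps)
  then have "germ n \<alpha> ([], iota n \<alpha> \<beta>, []) (\<lambda>i. i \<noteq> length \<mu> + K + r)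
      \<in> Theta n \<alpha> (\<gamma>, g, \<mu>) (cyl (\<mu> @ \<eta>))"
    using dip_germ_in_Theta[OF g g_fix _ ones_\<mu>\<eta> \<gamma>] g_section r by simp
  moreover have "germ n \<alpha> ([], iota n \<alpha> \<beta>, []) (\<lambda>i. i \<noteq> length \<mu> + K + r) \<in> T"
    using k pref_dip(1) r by simp
  ultimately show "\<exists>y. y \<in> Theta n \<alpha> (\<gamma>, g, \<mu>) (cyl (\<mu> @ \<eta>)) \<and> y \<in> T"
    by blast
qed

theorem mainTheorem7:
  fixes n :: nat and \<alpha> :: "'k::{field,finite}"
    and \<gamma> \<mu> \<eta> :: "bool list" and g :: "bool list \<Rightarrow> bool list"
  assumes "n \<ge> 2"
    and "CARD('k) = 2 ^ n"
    and "\<forall>x::'k. x \<noteq> 0 \<longrightarrow> (\<exists>i::nat. x = \<alpha> ^ i)"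
    and "g \<in> Ggrp n \<alpha>"
  shows "(\<exists>h\<in>N0 n \<alpha>. germ n \<alpha> ([], h, []) ones \<in>
            Gtop n \<alpha> closure_of Theta n \<alpha> (\<gamma>, g, \<mu>) (cyl (\<mu> @ \<eta>)))
     \<longleftrightarrow> (\<forall>h\<in>N0 n \<alpha>. germ n \<alpha> ([], h, []) ones \<in>
            Gtop n \<alpha> closure_of Theta n \<alpha> (\<gamma>, g, \<mu>) (cyl (\<mu> @ \<eta>)))"
proof
  assume "\<exists>h\<in>N0 n \<alpha>. germ n \<alpha> ([], h, []) ones \<in>
    Gtop n \<alpha> closure_of Theta n \<alpha> (\<gamma>, g, \<mu>) (cyl (\<mu> @ \<eta>))"
  then obtain \<beta> where "germ n \<alpha> ([], iota n \<alpha> \<beta>, []) ones \<in>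
      Gtop n \<alpha> closure_of Theta n \<alpha> (\<gamma>, g, \<mu>) (cyl (\<mu> @ \<eta>))"
    by (auto simp: N0_def)
  note ray_fixed = ones_germ_in_closure_imp_ray_fixed[OF assms(4) this]
  show "\<forall>h\<in>N0 n \<alpha>. germ n \<alpha> ([], h, []) ones \<in>
    Gtop n \<alpha> closure_of Theta n \<alpha> (\<gamma>, g, \<mu>) (cyl (\<mu> @ \<eta>))"
    using ones_germ_in_closure_if_ray_fixed[OF assms ray_fixed] by (auto simp: N0_def)
next
  assume "\<forall>h\<in>N0 n \<alpha>. germ n \<alpha> ([], h, []) ones \<in>
    Gtop n \<alpha> closure_of Theta n \<alpha> (\<gamma>, g, \<mu>) (cyl (\<mu> @ \<eta>))"
  then show "\<exists>h\<in>N0 n \<alpha>. germ n \<alpha> ([], h, []) ones \<in>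
    Gtop n \<alpha> closure_of Theta n \<alpha> (\<gamma>, g, \<mu>) (cyl (\<mu> @ \<eta>))"
    using id_in_N0 by blast
qed

end
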